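(* Let $(G,S)$ be a Cayley graph of a group of polynomial volume growth with homogeneous dimension $D$. Then for every (small) $\theta>0$ there exists $R_0(\theta,S)$ such that $$\frac{|B_p(R)|}{|B_p(r)|}\leq(1+\theta)\left(\frac{R}{r}\right)^D$$ for all $p\in G$ and all real $R\geq r\geq R_0(\theta,S)$.
   Context: For a group $G$ with finite symmetric generating set $S$, the Cayley graph has $x\sim y$ iff $x=ys$ for some $s\in S$, with word metric $d^S$ (shortest path length). $B_p(t)=\{x\in G: d^S(x,p)\leq t\}$ for real $t\ge0$, and $|B_p(t)|$ is its cardinality. $G$ has polynomial volume growth if $|B_e(n)|\leq Cn^A$ for some $C,A>0$ and all $n\geq1$. The homogeneous dimension is the integer $D$ for which $C_1n^D\leq|B_e(n)|\leq C_2n^D$ for all $n\ge1$ and some $C_1,C_2>0$; moreover $\lim_{n\to\infty}|B_e(n)|/n^D$ exists and is a finite positive constant. *)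

theory Defs
  imports "HOL-Analysis.Analysis" "HOL-Algebra.Algebra"
begin

inductive cayley_walk :: "('a, 'b) monoid_scheme \<Rightarrow> 'a set \<Rightarrow> nat \<Rightarrow> 'a \<Rightarrow> 'a \<Rightarrow> bool"
  for G S where
  refl: "x \<in> carrier G \<Longrightarrow> cayley_walk G S 0 x x"
| step: "\<lbrakk>s \<in> S; z \<in> carrier G; cayley_walk G S n z y\<rbrakk>
          \<Longrightarrow> cayley_walk G S (Suc n) (z \<otimes>\<^bsub>G\<^esub> s) y"

definition word_dist :: "('a, 'b) monoid_scheme \<Rightarrow> 'a set \<Rightarrow> 'a \<Rightarrow> 'a \<Rightarrow> nat" where
  "word_dist G S x y = (LEAST n. cayley_walk G S n x y)"

definition word_ball :: "('a, 'b) monoid_scheme \<Rightarrow> 'a set \<Rightarrow> 'a \<Rightarrow> real \<Rightarrow> 'a set" where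
  "word_ball G S p t = {x \<in> carrier G. real (word_dist G S x p) \<le> t}"

definition fin_sym_gen_set :: "('a, 'b) monoid_scheme \<Rightarrow> 'a set \<Rightarrow> bool" where
  "fin_sym_gen_set G S \<longleftrightarrow> finite S \<and> S \<subseteq> carrier G \<and> (\<forall>s\<in>S. inv\<^bsub>G\<^esub> s \<in> S)
     \<and> generate G S = carrier G"

definition polynomial_growth :: "('a, 'b) monoid_scheme \<Rightarrow> 'a set \<Rightarrow> bool" where
  "polynomial_growth G S \<longleftrightarrow> (\<exists>C A::real. C > 0 \<and> A > 0 \<and>
     (\<forall>n::nat. n \<ge> 1 \<longrightarrow> real (card (word_ball G S \<one>\<^bsub>G\<^esub> (real n))) \<le> C * real n powr A))"

text \<open>D is the homogeneous dimension: two-sided bounds C1 n^D <= |B_e(n)| <= C2 n^D,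
  together with the (standing) fact that |B_e(n)|/n^D converges to a finite positive limit.\<close>
definition homogeneous_dimension :: "('a, 'b) monoid_scheme \<Rightarrow> 'a set \<Rightarrow> nat \<Rightarrow> bool" where
  "homogeneous_dimension G S D \<longleftrightarrow>
     (\<exists>C1 C2::real. C1 > 0 \<and> C2 > 0 \<and> (\<forall>n::nat. n \<ge> 1 \<longrightarrow>
        C1 * real n ^ D \<le> real (card (word_ball G S \<one>\<^bsub>G\<^esub> (real n))) \<and>
        real (card (word_ball G S \<one>\<^bsub>G\<^esub> (real n))) \<le> C2 * real n ^ D))"

end

theory Submission
  imports Defs
begin

text \<open>Left multiplication is a graph automorphism of the Cayley graph, so every ball
  B_p(t) has as many elements as B_e(t), and B_e(t) = B_e(\<lfloor>t\<rfloor>). The ratio in question is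
  therefore f(\<lfloor>R\<rfloor>) / f(\<lfloor>r\<rfloor>) for f(n) = |B_e(n)|. Put K = \<surd>(1+\<theta>). Since f(n)/n^D \<rightarrow> L > 0,
  for large n \<le> m both f(n)/n^D and f(m)/m^D lie in (L/\<surd>K, L\<surd>K), so f(m)/f(n) \<le> K (m/n)^D;
  passing from \<lfloor>r\<rfloor> to r costs at most ((\<lfloor>r\<rfloor>+1)/\<lfloor>r\<rfloor>)^D, which is eventually below the
  second factor K.\<close>

lemma (in group) cayley_walk_left_mult:
  assumes "S \<subseteq> carrier G" "g \<in> carrier G" "cayley_walk G S n x y"
  shows "cayley_walk G S n (g \<otimes> x) (g \<otimes> y)"
  using assms(3)
proof (induction rule: cayley_walk.induct)
  case (refl x)
  then show ?case using assms(2) by (simp add: cayley_walk.refl)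
next
  case (step s z n y)
  then have "cayley_walk G S (Suc n) ((g \<otimes> z) \<otimes> s) (g \<otimes> y)"
    using assms(2) by (intro cayley_walk.step) auto
  then show ?case using step assms by (simp add: m_assoc subsetD)
qed

lemma (in group) cayley_walk_left_mult_iff:
  assumes "S \<subseteq> carrier G" "g \<in> carrier G" "x \<in> carrier G" "y \<in> carrier G"
  shows "cayley_walk G S n (g \<otimes> x) (g \<otimes> y) \<longleftrightarrow> cayley_walk G S n x y"
proof
  assume "cayley_walk G S n (g \<otimes> x) (g \<otimes> y)"
  then have "cayley_walk G S n (inv g \<otimes> (g \<otimes> x)) (inv g \<otimes> (g \<otimes> y))"
    using assms by (auto intro: cayley_walk_left_mult)
  moreover have "inv g \<otimes> (g \<otimes> u) = u" if "u \<in> carrier G" for u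
    using assms that by (simp add: m_assoc[symmetric])
  ultimately show "cayley_walk G S n x y"
    using assms by simp
qed (use assms cayley_walk_left_mult in auto)

lemma (in group) word_dist_left_mult:
  assumes "S \<subseteq> carrier G" "g \<in> carrier G" "x \<in> carrier G" "y \<in> carrier G"
  shows "word_dist G S (g \<otimes> x) (g \<otimes> y) = word_dist G S x y"
  unfolding word_dist_def using cayley_walk_left_mult_iff[OF assms] by simp

lemma (in group) word_ball_left_mult:
  assumes "S \<subseteq> carrier G" "p \<in> carrier G"
  shows "(\<lambda>x. p \<otimes> x) ` word_ball G S \<one> t = word_ball G S p t"
proof safe
  fix x assume "x \<in> word_ball G S \<one> t"
  then show "p \<otimes> x \<in> word_ball G S p t"
    using word_dist_left_mult[OF assms, of x \<one>] assms by (simp add: word_ball_def)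
next
  fix y assume y: "y \<in> word_ball G S p t"
  then have "y \<in> carrier G" by (simp add: word_ball_def)
  then have "y = p \<otimes> (inv p \<otimes> y)" and "inv p \<otimes> y \<in> word_ball G S \<one> t"
    using y word_dist_left_mult[OF assms, of "inv p \<otimes> y" \<one>] assms
    by (simp_all add: word_ball_def m_assoc[symmetric])
  then show "y \<in> (\<lambda>x. p \<otimes> x) ` word_ball G S \<one> t" by blast
qed

lemma (in group) card_word_ball_eq_card_word_ball_one:
  assumes "S \<subseteq> carrier G" "p \<in> carrier G"
  shows "card (word_ball G S p t) = card (word_ball G S \<one> t)"
proof -
  have "inj_on (\<lambda>x. p \<otimes> x) (word_ball G S \<one> t)"
    using inj_on_cmult[OF assms(2)] by (rule inj_on_subset) (auto simp: word_ball_def)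
  then show ?thesis
    using card_image word_ball_left_mult[OF assms] by metis
qed

lemma word_ball_floor:
  assumes "t \<ge> 0"
  shows "word_ball G S p t = word_ball G S p (real (nat \<lfloor>t\<rfloor>))"
proof -
  have "real d \<le> t \<longleftrightarrow> real d \<le> real_of_int \<lfloor>t\<rfloor>" for d :: nat
    by (metis le_floor_iff of_int_le_iff of_int_of_nat_eq)
  then show ?thesis
    using assms unfolding word_ball_def by auto
qed

lemma eventually_Suc_power_le:
  fixes c :: real
  assumes "c > 1"
  shows "eventually (\<lambda>n. (real n + 1) ^ D \<le> c * real n ^ D) sequentially"
proof -
  have "(\<lambda>n. (1 + 1 / real n) ^ D) \<longlonglongrightarrow> (1 + 0) ^ D"
    by (intro tendsto_intros lim_1_over_n)
  then have "eventually (\<lambda>n. (1 + 1 / real n) ^ D < c) sequentially"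
    using assms by (intro order_tendstoD) auto
  moreover have "eventually (\<lambda>n. n \<ge> 1) sequentially"
    by (rule eventually_ge_at_top)
  ultimately show ?thesis
  proof eventually_elim
    case (elim n)
    then have "(real n + 1) ^ D = real n ^ D * (1 + 1 / real n) ^ D"
      by (simp add: power_mult_distrib[symmetric] field_simps)
    also have "\<dots> \<le> real n ^ D * c"
      using elim by (intro mult_left_mono) auto
    finally show ?case by (simp add: mult.commute)
  qed
qed

lemma ratio_le_of_tendsto_power:
  fixes f :: "nat \<Rightarrow> real"
  assumes lim: "(\<lambda>n. f n / real n ^ D) \<longlonglongrightarrow> L" and "L > 0" "K > 1"
  shows "\<exists>N. \<forall>n\<ge>N. \<forall>m\<ge>n. f m / f n \<le> K * (real m / real n) ^ D"
proof -
  define q where "q n = f n / real n ^ D" for n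
  have "eventually (\<lambda>n. q n < L * sqrt K) sequentially"
    using lim assms by (intro order_tendstoD) (auto simp: q_def)
  moreover have "eventually (\<lambda>n. L / sqrt K < q n) sequentially"
    using lim assms by (intro order_tendstoD) (auto simp: q_def field_simps)
  moreover have "eventually (\<lambda>n. n \<ge> 1) sequentially"
    by (rule eventually_ge_at_top)
  ultimately have "eventually (\<lambda>n. q n < L * sqrt K \<and> L / sqrt K < q n \<and> n \<ge> 1) sequentially"
    by eventually_elim blast
  then obtain N where N: "\<And>n. n \<ge> N \<Longrightarrow> q n < L * sqrt K \<and> L / sqrt K < q n \<and> n \<ge> 1"
    unfolding eventually_sequentially by blast
  have "f m / f n \<le> K * (real m / real n) ^ D" if "N \<le> n" "n \<le> m" for m n
  proof -
    have qpos: "0 < L / sqrt K" using assms by simp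
    have "q m / q n \<le> (L * sqrt K) / (L / sqrt K)"
      using N[of m] N[of n] that qpos by (intro frac_le) auto
    also have "\<dots> = K" using assms by (simp add: field_simps)
    finally have "q m / q n * (real m / real n) ^ D \<le> K * (real m / real n) ^ D"
      by (rule mult_right_mono) simp
    moreover have "f m / f n = q m / q n * (real m / real n) ^ D"
      using N[of m] N[of n] that by (simp add: q_def power_divide)
    ultimately show ?thesis by simp
  qed
  then show ?thesis by blast
qed

lemma floor_ratio_le_of_tendsto_power:
  fixes f :: "nat \<Rightarrow> real"
  assumes lim: "(\<lambda>n. f n / real n ^ D) \<longlonglongrightarrow> L" and "L > 0" "\<theta> > 0"
  shows "\<exists>R0\<ge>0. \<forall>R r. R0 \<le> r \<longrightarrow> r \<le> R \<longrightarrow>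
           f (nat \<lfloor>R\<rfloor>) / f (nat \<lfloor>r\<rfloor>) \<le> (1 + \<theta>) * (R / r) ^ D"
proof -
  define K where "K = sqrt (1 + \<theta>)"
  have K: "K > 1" "K * K = 1 + \<theta>" using assms by (simp_all add: K_def)
  obtain N1 where N1: "\<And>n m. N1 \<le> n \<Longrightarrow> n \<le> m \<Longrightarrow> f m / f n \<le> K * (real m / real n) ^ D"
    using ratio_le_of_tendsto_power[OF lim \<open>L > 0\<close> \<open>K > 1\<close>] by blast
  obtain N2 where N2: "\<And>n. N2 \<le> n \<Longrightarrow> (real n + 1) ^ D \<le> K * real n ^ D"
    using eventually_Suc_power_le[OF \<open>K > 1\<close>, of D] unfolding eventually_sequentially by blast
  define R0 where "R0 = real (max (max N1 N2) 1)"
  have "f (nat \<lfloor>R\<rfloor>) / f (nat \<lfloor>r\<rfloor>) \<le> (1 + \<theta>) * (R / r) ^ D" if "R0 \<le> r" "r \<le> R" for R r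
  proof -
    define a b where "a = nat \<lfloor>R\<rfloor>" and "b = nat \<lfloor>r\<rfloor>"
    have "max (max N1 N2) 1 \<le> b"
      using that unfolding R0_def b_def by (simp add: le_nat_floor)
    then have b: "N1 \<le> b" "N2 \<le> b" "1 \<le> b" by auto
    have "b \<le> a" unfolding a_def b_def using that by (simp add: floor_mono nat_mono)
    have r: "real b \<le> r" "r \<le> real b + 1" "real a \<le> R"
      using that b unfolding R0_def a_def b_def by linarith+
    have "(r / real b) ^ D \<le> ((real b + 1) / real b) ^ D"
      using r b by (intro power_mono divide_right_mono) auto
    also have "\<dots> \<le> K"
      using N2[OF b(2)] b by (simp add: power_divide divide_le_eq)
    finally have rb: "(r / real b) ^ D \<le> K" .
    have "f a / f b \<le> K * (real a / real b) ^ D" using N1 b \<open>b \<le> a\<close> by blast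
    also have "\<dots> \<le> K * (R / real b) ^ D"
      using r K b by (intro mult_left_mono power_mono divide_right_mono) auto
    also have "\<dots> = K * (r / real b) ^ D * (R / r) ^ D"
      using r b by (simp add: power_divide field_simps)
    also have "\<dots> \<le> K * K * (R / r) ^ D"
      using rb K r b that by (intro mult_right_mono mult_left_mono) auto
    finally show ?thesis unfolding a_def b_def K(2) .
  qed
  moreover have "R0 \<ge> 0" by (simp add: R0_def)
  ultimately show ?thesis by blast
qed

theorem lemma2p1:
  fixes G :: "('a, 'b) monoid_scheme" and S :: "'a set" and D :: nat
  assumes "group G"
    and "fin_sym_gen_set G S"
    and "polynomial_growth G S"
    and "homogeneous_dimension G S D"
    and "\<exists>L>0. (\<lambda>n. real (card (word_ball G S \<one>\<^bsub>G\<^esub> (real n))) / real n ^ D) \<longlonglongrightarrow> L"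
  shows "\<forall>\<theta>>0. \<exists>R0::real. \<forall>p\<in>carrier G. \<forall>R r::real. R0 \<le> r \<longrightarrow> r \<le> R \<longrightarrow>
           real (card (word_ball G S p R)) / real (card (word_ball G S p r))
             \<le> (1 + \<theta>) * (R / r) ^ D"
proof (intro allI impI)
  fix \<theta> :: real assume "\<theta> > 0"
  define f where "f n = real (card (word_ball G S \<one>\<^bsub>G\<^esub> (real n)))" for n
  obtain L where "L > 0" "(\<lambda>n. f n / real n ^ D) \<longlonglongrightarrow> L"
    using assms(5) unfolding f_def by blast
  then obtain R0 where "R0 \<ge> 0" and R0: "\<And>R r. R0 \<le> r \<Longrightarrow> r \<le> R \<Longrightarrow>
      f (nat \<lfloor>R\<rfloor>) / f (nat \<lfloor>r\<rfloor>) \<le> (1 + \<theta>) * (R / r) ^ D"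
    using floor_ratio_le_of_tendsto_power \<open>\<theta> > 0\<close> by blast
  have S: "S \<subseteq> carrier G" using assms(2) by (simp add: fin_sym_gen_set_def)
  have card_ball: "real (card (word_ball G S p t)) = f (nat \<lfloor>t\<rfloor>)" if "p \<in> carrier G" "t \<ge> 0" for p t
    unfolding f_def using group.card_word_ball_eq_card_word_ball_one[OF assms(1) S that(1)]
      word_ball_floor[OF that(2)] by metis
  show "\<exists>R0. \<forall>p\<in>carrier G. \<forall>R r. R0 \<le> r \<longrightarrow> r \<le> R \<longrightarrow>
          real (card (word_ball G S p R)) / real (card (word_ball G S p r)) \<le> (1 + \<theta>) * (R / r) ^ D"
    using R0 card_ball \<open>R0 \<ge> 0\<close> by (intro exI[of _ R0]) auto
qed

end
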